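(* Let $(B,\lfloor\cdot,\cdot\rfloor)$ be an SSD space with associated quadratic form $q$, and let $A\subset B$ be a maximally $q$-positive set which is convex. Then $A$ is an affine subset of $B$.
   Context: An SSD (symmetrically self-dual) space is a pair $(B,\lfloor\cdot,\cdot\rfloor)$ where $B$ is a nonzero real vector space and $\lfloor\cdot,\cdot\rfloor:B\times B\to\mathbb{R}$ is a symmetric bilinear form; its quadratic form is $q(b)=\frac12\lfloor b,b\rfloor$. A nonempty set $A\subset B$ is $q$-positive if $q(b-c)\ge 0$ for all $b,c\in A$. A set is maximally $q$-positive if it is $q$-positive and not properly contained in any other $q$-positive set. *)

theory Defs
  imports "HOL-Analysis.Analysis"
begin

definition SSD_space :: "('a::real_vector \<Rightarrow> 'a \<Rightarrow> real) \<Rightarrow> bool" where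
  "SSD_space br \<longleftrightarrow> (\<exists>x::'a. x \<noteq> 0) \<and> bilinear br \<and> (\<forall>b c. br b c = br c b)"

definition ssd_q :: "('a::real_vector \<Rightarrow> 'a \<Rightarrow> real) \<Rightarrow> 'a \<Rightarrow> real" where
  "ssd_q br b = (1/2) * br b b"

definition q_positive :: "('a::real_vector \<Rightarrow> 'a \<Rightarrow> real) \<Rightarrow> 'a set \<Rightarrow> bool" where
  "q_positive br A \<longleftrightarrow> A \<noteq> {} \<and> (\<forall>b\<in>A. \<forall>c\<in>A. ssd_q br (b - c) \<ge> 0)"

definition maximally_q_positive :: "('a::real_vector \<Rightarrow> 'a \<Rightarrow> real) \<Rightarrow> 'a set \<Rightarrow> bool" where
  "maximally_q_positive br A \<longleftrightarrow> q_positive br A \<and>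
     (\<forall>A'. q_positive br A' \<and> A \<subseteq> A' \<longrightarrow> A' = A)"

end

theory Submission
  imports Defs
begin

text \<open>Let \<open>A\<close> be convex and \<open>q\<close>-positive, \<open>x = u a + v b\<close> with \<open>a, b \<in> A\<close>, \<open>u + v = 1\<close>, and
  \<open>c \<in> A\<close>. Either \<open>x \<in> A\<close>, or one coefficient, say \<open>v\<close>, is at least \<open>1\<close>; then
  \<open>x - c = v (b - p)\<close> where \<open>p = (c - u a)/v\<close> is a convex combination of \<open>a\<close> and \<open>c\<close>, so
  \<open>q (x - c) = v\<^sup>2 q (b - p) \<ge> 0\<close>. Hence \<open>A \<union> {x}\<close> is still \<open>q\<close>-positive, and maximality
  gives \<open>x \<in> A\<close>.\<close>

lemma ssd_q_scaleR:
  assumes "bilinear br"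
  shows "ssd_q br (m *\<^sub>R x) = m\<^sup>2 * ssd_q br x"
proof -
  have "linear (\<lambda>y. br x y)" "linear (\<lambda>y. br y (m *\<^sub>R x))"
    using assms unfolding bilinear_def by blast+
  then have "br (m *\<^sub>R x) (m *\<^sub>R x) = m * (m * br x x)"
    using linear_scale[of "\<lambda>y. br y (m *\<^sub>R x)"] linear_scale[of "\<lambda>y. br x y"] by simp
  then show ?thesis
    unfolding ssd_q_def by (simp add: power2_eq_square)
qed

lemma ssd_q_minus:
  assumes "bilinear br"
  shows "ssd_q br (- x) = ssd_q br x"
  using ssd_q_scaleR[OF assms, of "-1" x] by simp

lemma ssd_q_zero:
  assumes "bilinear br"
  shows "ssd_q br 0 = 0"
  using ssd_q_scaleR[OF assms, of 0 0] by simp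

lemma q_positive_insert:
  assumes "bilinear br" "q_positive br A" "\<And>c. c \<in> A \<Longrightarrow> ssd_q br (x - c) \<ge> 0"
  shows "q_positive br (insert x A)"
proof -
  have "ssd_q br (c - x) \<ge> 0" if "c \<in> A" for c
    using assms(3)[OF that] ssd_q_minus[OF assms(1), of "x - c"] by simp
  then show ?thesis
    using assms ssd_q_zero[OF assms(1)] unfolding q_positive_def by auto
qed

lemma maximally_q_positive_memI:
  assumes "bilinear br" "maximally_q_positive br A" "\<And>c. c \<in> A \<Longrightarrow> ssd_q br (x - c) \<ge> 0"
  shows "x \<in> A"
proof -
  have "q_positive br A"
    using assms(2) unfolding maximally_q_positive_def by blast
  then have "q_positive br (insert x A)"
    using q_positive_insert[OF assms(1)] assms(3) by blast
  with assms(2) have "insert x A = A"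
    unfolding maximally_q_positive_def by blast
  then show ?thesis by blast
qed

lemma q_nonneg_affine_outside_segment:
  assumes "bilinear br" "q_positive br A" "convex A"
    and "a \<in> A" "b \<in> A" "c \<in> A" "u \<le> 0" "u + v = 1"
  shows "ssd_q br (u *\<^sub>R a + v *\<^sub>R b - c) \<ge> 0"
proof -
  have v: "v \<ge> 1" using assms(7,8) by simp
  define p where "p = (- u / v) *\<^sub>R a + (1 / v) *\<^sub>R c"
  have "p \<in> A"
    unfolding p_def using assms(7,8) v
    by (intro convexD[OF assms(3,4,6)]) (auto simp: field_simps)
  have "u *\<^sub>R a + v *\<^sub>R b - c = v *\<^sub>R (b - p)"
    using v unfolding p_def by (simp add: algebra_simps)
  then show ?thesis
    using \<open>p \<in> A\<close> assms(2,5) ssd_q_scaleR[OF assms(1)] unfolding q_positive_def by simp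
qed

lemma q_nonneg_affine_combination:
  assumes "bilinear br" "q_positive br A" "convex A"
    and "a \<in> A" "b \<in> A" "c \<in> A" "u + v = 1"
  shows "ssd_q br (u *\<^sub>R a + v *\<^sub>R b - c) \<ge> 0"
proof -
  consider "u \<le> 0" | "v \<le> 0" | "0 \<le> u" "0 \<le> v" by linarith
  then show ?thesis
  proof cases
    case 1
    then show ?thesis using q_nonneg_affine_outside_segment[OF assms(1-6) _ assms(7)] by blast
  next
    case 2
    then have "ssd_q br (v *\<^sub>R b + u *\<^sub>R a - c) \<ge> 0"
      using q_nonneg_affine_outside_segment[of br A b a c v u] assms by simp
    then show ?thesis by (simp add: add.commute)
  next
    case 3
    then have "u *\<^sub>R a + v *\<^sub>R b \<in> A" using convexD[OF assms(3-5) _ _ assms(7)] by blast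
    then show ?thesis using assms(2,6) unfolding q_positive_def by blast
  qed
qed

theorem mainTheorem1:
  fixes br :: "'a::real_vector \<Rightarrow> 'a \<Rightarrow> real" and A :: "'a set"
  assumes "SSD_space br"
    and "maximally_q_positive br A"
    and "convex A"
  shows "affine A"
  unfolding affine_def
proof (intro ballI allI impI)
  fix a b u v assume "a \<in> A" "b \<in> A" "u + v = (1::real)"
  have bl: "bilinear br" using assms(1) unfolding SSD_space_def by blast
  have "q_positive br A" using assms(2) unfolding maximally_q_positive_def by blast
  show "u *\<^sub>R a + v *\<^sub>R b \<in> A"
    using q_nonneg_affine_combination[OF bl \<open>q_positive br A\<close> assms(3) \<open>a \<in> A\<close> \<open>b \<in> A\<close> _ \<open>u + v = 1\<close>]
    by (rule maximally_q_positive_memI[OF bl assms(2)])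
qed

end
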